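(* Let $n\ge2$ and $\delta>0$, and let $\mathtt S_{n,\delta}:=\{(\mathbf a,\mathbf b)\in\mathtt S_n: a_0>\delta\}$. Then the inverse NLFT is Lipschitz continuous on $\mathtt S_{n,\delta}$ (Euclidean metrics), with a Lipschitz constant depending only on $n$ and $\delta$.
   Context: For $(\mathbf a,\mathbf b)\in\mathbb C^n\times\mathbb C^n$ let $a(z)=\sum_{k=0}^{n-1}a_kz^{-k}$, $b(z)=\sum_{k=0}^{n-1}b_kz^k$, and $a^*(z):=\overline{a(1/\overline z)}$ (similarly $b^*$). $\mathtt S_n$ is the set of $(\mathbf a,\mathbf b)$ with $a_0$ real and positive and $aa^*+bb^*=1$. The NLFT of $\boldsymbol\gamma$ supported in $\{0,\dots,n-1\}$ is $\prod_{k=0}^{n-1}\frac{1}{\sqrt{1+|\gamma_k|^2}}\begin{pmatrix}1&\gamma_kz^k\\-\overline{\gamma_k}z^{-k}&1\end{pmatrix}=\begin{pmatrix}a&b\\-b^*&a^*\end{pmatrix}$ (ordered by increasing $k$); it is a bijection from such sequences onto $\mathtt S_n$ and its inverse is the inverse NLFT. *)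

theory Defs
  imports "HOL-Analysis.Analysis"
begin

text \<open>Coefficient sequences are functions nat \<Rightarrow> complex; only indices < n matter.
  a(z) = sum_{k<n} a_k z^(-k),  b(z) = sum_{k<n} b_k z^k.\<close>

definition lpoly_a :: "nat \<Rightarrow> (nat \<Rightarrow> complex) \<Rightarrow> complex \<Rightarrow> complex" where
  "lpoly_a n a z = (\<Sum>k<n. a k * inverse z ^ k)"

definition lpoly_b :: "nat \<Rightarrow> (nat \<Rightarrow> complex) \<Rightarrow> complex \<Rightarrow> complex" where
  "lpoly_b n b z = (\<Sum>k<n. b k * z ^ k)"

definition star :: "(complex \<Rightarrow> complex) \<Rightarrow> complex \<Rightarrow> complex" where
  "star f z = cnj (f (inverse (cnj z)))"

text \<open>The set S_n of pairs (a,b) with a_0 real positive and a a^* + b b^* = 1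
  (as Laurent polynomials, i.e. for all z \<noteq> 0).\<close>
definition S_set :: "nat \<Rightarrow> ((nat \<Rightarrow> complex) \<times> (nat \<Rightarrow> complex)) set" where
  "S_set n = {(a, b). (\<forall>k\<ge>n. a k = 0) \<and> (\<forall>k\<ge>n. b k = 0) \<and>
      Im (a 0) = 0 \<and> Re (a 0) > 0 \<and>
      (\<forall>z. z \<noteq> 0 \<longrightarrow>
         lpoly_a n a z * star (lpoly_a n a) z + lpoly_b n b z * star (lpoly_b n b) z = 1)}"

definition S_delta :: "nat \<Rightarrow> real \<Rightarrow> ((nat \<Rightarrow> complex) \<times> (nat \<Rightarrow> complex)) set" where
  "S_delta n \<delta> = {(a, b) \<in> S_set n. Re (a 0) > \<delta>}"

definition mat2 :: "complex \<Rightarrow> complex \<Rightarrow> complex \<Rightarrow> complex \<Rightarrow> complex^2^2" where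
  "mat2 p q r s = vector [vector [p, q], vector [r, s]]"

definition nlft_factor :: "complex \<Rightarrow> nat \<Rightarrow> complex \<Rightarrow> complex^2^2" where
  "nlft_factor g k z = (1 / sqrt (1 + (cmod g)\<^sup>2)) *\<^sub>R
     (mat2 1 (g * z ^ k) (- cnj g * inverse z ^ k) 1)"

definition nlft_mat :: "nat \<Rightarrow> (nat \<Rightarrow> complex) \<Rightarrow> complex \<Rightarrow> complex^2^2" where
  "nlft_mat n \<gamma> z = foldl (\<lambda>M k. M ** nlft_factor (\<gamma> k) k z) (mat 1) [0..<n]"

definition has_nlft :: "nat \<Rightarrow> (nat \<Rightarrow> complex) \<Rightarrow> (nat \<Rightarrow> complex) \<times> (nat \<Rightarrow> complex) \<Rightarrow> bool" where
  "has_nlft n \<gamma> ab \<longleftrightarrow> (\<forall>k\<ge>n. \<gamma> k = 0) \<and>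
     (\<forall>z. z \<noteq> 0 \<longrightarrow> nlft_mat n \<gamma> z =
        mat2 (lpoly_a n (fst ab) z) (lpoly_b n (snd ab) z)
             (- star (lpoly_b n (snd ab)) z) (star (lpoly_a n (fst ab)) z))"

definition inv_nlft :: "nat \<Rightarrow> (nat \<Rightarrow> complex) \<times> (nat \<Rightarrow> complex) \<Rightarrow> nat \<Rightarrow> complex" where
  "inv_nlft n ab = (THE \<gamma>. has_nlft n \<gamma> ab)"

definition dist_seq :: "nat \<Rightarrow> (nat \<Rightarrow> complex) \<Rightarrow> (nat \<Rightarrow> complex) \<Rightarrow> real" where
  "dist_seq n x y = sqrt (\<Sum>k<n. (cmod (x k - y k))\<^sup>2)"

definition dist_pair :: "nat \<Rightarrow> (nat \<Rightarrow> complex) \<times> (nat \<Rightarrow> complex) \<Rightarrow>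
    (nat \<Rightarrow> complex) \<times> (nat \<Rightarrow> complex) \<Rightarrow> real" where
  "dist_pair n p q = sqrt (\<Sum>k<n. (cmod (fst p k - fst q k))\<^sup>2 + (cmod (snd p k - snd q k))\<^sup>2)"

end

theory Submission
  imports Defs
begin

text \<open>
  The first factor of the NLFT peels off: if \<open>(a', b')\<close> is the NLFT of the shifted sequence
  \<open>\<gamma>\<^sub>1, \<gamma>\<^sub>2, \<dots>\<close>, then the NLFT \<open>(a, b)\<close> of \<open>\<gamma>\<close> is an explicit linear image of \<open>(a', b')\<close>
  determined by \<open>\<gamma>\<^sub>0\<close> (\<open>add_layer\<close>), and \<open>\<gamma>\<^sub>0 = b\<^sub>0 / a\<^sub>0\<close>. Inverting this map
  (\<open>strip_layer\<close>) recovers \<open>\<gamma>\<close> coefficient by coefficient. That stripping stays inside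
  \<open>S\<^sub>n\<close> uses \<open>det [[a, b], [-b\<^sup>*, a\<^sup>*]] = a a\<^sup>* + b b\<^sup>*\<close> together with the vanishing of the
  top coefficient \<open>a\<^sub>n\<^sub>-\<^sub>1 a\<^sub>0\<^sup>* + b\<^sub>0 b\<^sub>n\<^sub>-\<^sub>1\<^sup>*\<close> of that identity.

  Each stripping step is built from sums, products, conjugation, \<open>g \<mapsto> (1 + |g|\<^sup>2)\<^sup>-\<^sup>1\<^sup>/\<^sup>2\<close>
  and division by \<open>a\<^sub>0\<close>, hence is bounded and Lipschitz on sets where the coefficients are
  bounded and \<open>a\<^sub>0 > \<delta>\<close>; stripping does not decrease \<open>a\<^sub>0\<close> and enlarges the coefficient bound
  only by a factor depending on \<open>\<delta>\<close>. On \<open>S\<^sub>n\<^sub>,\<^sub>\<delta>\<close> the identity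
  \<open>a\<^sub>0 = \<Prod>\<^sub>k (1 + |\<gamma>\<^sub>k|\<^sup>2)\<^sup>-\<^sup>1\<^sup>/\<^sup>2\<close> forces \<open>|\<gamma>\<^sub>k| < 1/\<delta>\<close>, which bounds all coefficients
  in terms of \<open>n\<close> and \<open>\<delta>\<close>.
\<close>

section \<open>Two-by-two matrices\<close>

lemma mat2_nth [simp]:
  "mat2 p q r s $ 1 $ 1 = p" "mat2 p q r s $ 1 $ 2 = q"
  "mat2 p q r s $ 2 $ 1 = r" "mat2 p q r s $ 2 $ 2 = s"
  by (simp_all add: mat2_def)

lemma mat2_eq_iff:
  "(M::complex^2^2) = mat2 p q r s \<longleftrightarrow> M$1$1 = p \<and> M$1$2 = q \<and> M$2$1 = r \<and> M$2$2 = s"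
  by (auto simp: vec_eq_iff forall_2)

lemma mat2_inject: "mat2 p q r s = mat2 e f g h \<longleftrightarrow> p = e \<and> q = f \<and> r = g \<and> s = h"
  by (simp add: mat2_eq_iff)

lemma mat2_mult:
  "mat2 p q r s ** mat2 e f g h = mat2 (p*e + q*g) (p*f + q*h) (r*e + s*g) (r*f + s*h)"
  by (simp add: mat2_eq_iff matrix_matrix_mult_def sum_2)

lemma mat_1_eq_mat2: "mat 1 = mat2 1 0 0 1"
  by (simp add: mat2_eq_iff mat_def)

lemma scaleR_mat2: "c *\<^sub>R mat2 p q r s = mat2 (c *\<^sub>R p) (c *\<^sub>R q) (c *\<^sub>R r) (c *\<^sub>R s)"
  by (simp add: mat2_eq_iff)

lemma det_mat2: "det (mat2 p q r s) = p * s - q * r"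
  by (simp add: det_2)

definition zdiag :: "complex \<Rightarrow> complex^2^2" where
  "zdiag z = mat2 z 0 0 1"

lemma zdiag_inverse_mult: "z \<noteq> 0 \<Longrightarrow> zdiag (inverse z) ** zdiag z = mat 1"
  and zdiag_mult_inverse: "z \<noteq> 0 \<Longrightarrow> zdiag z ** zdiag (inverse z) = mat 1"
  by (simp_all add: zdiag_def mat2_mult mat_1_eq_mat2)

lemma det_zdiag: "det (zdiag z) = z"
  by (simp add: zdiag_def det_mat2)

lemma nlft_factor_Suc:
  "z \<noteq> 0 \<Longrightarrow> nlft_factor g (Suc k) z = zdiag z ** nlft_factor g k z ** zdiag (inverse z)"
  by (simp add: nlft_factor_def zdiag_def mat2_mult scaleR_mat2 field_simps)

lemma foldl_matrix_mult_start:
  fixes f :: "nat \<Rightarrow> 'a::semiring_1^'n^'n" and M0 :: "'a^'n^'n"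
  shows "foldl (\<lambda>M k. M ** f k) M0 xs = M0 ** foldl (\<lambda>M k. M ** f k) (mat 1) xs"
proof (induction xs arbitrary: M0)
  case Nil
  then show ?case by (simp add: matrix_mul_rid)
next
  case (Cons x xs)
  show ?case
    using Cons[of "M0 ** f x"] Cons[of "mat 1 ** f x"] by (simp add: matrix_mul_assoc matrix_mul_lid)
qed

lemma foldl_matrix_mult_conj:
  fixes f :: "nat \<Rightarrow> 'a::semiring_1^'n^'n" and M0 P Q :: "'a^'n^'n"
  assumes "Q ** P = mat 1"
  shows "foldl (\<lambda>M k. M ** (P ** f k ** Q)) (P ** M0 ** Q) xs = P ** foldl (\<lambda>M k. M ** f k) M0 xs ** Q"
proof (induction xs arbitrary: M0)
  case Nil
  then show ?case by simp
next
  case (Cons x xs)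
  have "(P ** M0 ** Q) ** (P ** f x ** Q) = P ** (M0 ** f x) ** Q"
    by (metis assms matrix_mul_assoc matrix_mul_rid)
  then show ?case using Cons[of "M0 ** f x"] by simp
qed

lemma nlft_mat_Suc:
  assumes z: "z \<noteq> 0"
  shows "nlft_mat (Suc m) \<gamma> z =
    nlft_factor (\<gamma> 0) 0 z ** (zdiag z ** nlft_mat m (\<lambda>k. \<gamma> (Suc k)) z ** zdiag (inverse z))"
proof -
  let ?F = "\<lambda>k. zdiag z ** nlft_factor (\<gamma> (Suc k)) k z ** zdiag (inverse z)"
  have "nlft_mat (Suc m) \<gamma> z = foldl (\<lambda>M k. M ** ?F k) (mat 1 ** nlft_factor (\<gamma> 0) 0 z) [0..<m]"
    unfolding nlft_mat_def upt_conv_Cons[OF zero_less_Suc] map_Suc_upt[symmetric]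
    by (simp add: foldl_map nlft_factor_Suc[OF z])
  also have "\<dots> = nlft_factor (\<gamma> 0) 0 z ** foldl (\<lambda>M k. M ** ?F k) (zdiag z ** mat 1 ** zdiag (inverse z)) [0..<m]"
    by (subst foldl_matrix_mult_start) (simp add: matrix_mul_lid matrix_mul_rid zdiag_mult_inverse[OF z])
  also have "\<dots> = nlft_factor (\<gamma> 0) 0 z ** (zdiag z ** nlft_mat m (\<lambda>k. \<gamma> (Suc k)) z ** zdiag (inverse z))"
    unfolding nlft_mat_def by (subst foldl_matrix_mult_conj[OF zdiag_inverse_mult[OF z]]) simp
  finally show ?thesis .
qed

section \<open>Coefficient matrices and layers\<close>

definition coeff_mat :: "nat \<Rightarrow> (nat \<Rightarrow> complex) \<times> (nat \<Rightarrow> complex) \<Rightarrow> complex \<Rightarrow> complex^2^2" where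
  "coeff_mat N ab z = mat2 (lpoly_a N (fst ab) z) (lpoly_b N (snd ab) z)
      (- star (lpoly_b N (snd ab)) z) (star (lpoly_a N (fst ab)) z)"

lemma has_nlft_iff_coeff_mat:
  "has_nlft n \<gamma> ab \<longleftrightarrow> (\<forall>k\<ge>n. \<gamma> k = 0) \<and> (\<forall>z. z \<noteq> 0 \<longrightarrow> nlft_mat n \<gamma> z = coeff_mat n ab z)"
  by (simp add: has_nlft_def coeff_mat_def)

lemma det_coeff_mat:
  "det (coeff_mat N (a, b) z) = lpoly_a N a z * star (lpoly_a N a) z + lpoly_b N b z * star (lpoly_b N b) z"
  by (simp add: coeff_mat_def det_mat2)

lemma star_lpoly_a: "star (lpoly_a N a) = lpoly_b N (\<lambda>k. cnj (a k))"
  by (simp add: fun_eq_iff star_def lpoly_a_def lpoly_b_def)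

lemma star_lpoly_b: "star (lpoly_b N b) = lpoly_a N (\<lambda>k. cnj (b k))"
  by (simp add: fun_eq_iff star_def lpoly_a_def lpoly_b_def)

lemma lpoly_a_add: "lpoly_a N (\<lambda>k. f k + g k) z = lpoly_a N f z + lpoly_a N g z"
  and lpoly_a_diff: "lpoly_a N (\<lambda>k. f k - g k) z = lpoly_a N f z - lpoly_a N g z"
  and lpoly_a_cmult: "lpoly_a N (\<lambda>k. c * f k) z = c * lpoly_a N f z"
  by (simp_all add: lpoly_a_def algebra_simps sum.distrib sum_subtractf sum_distrib_left)

lemma lpoly_b_add: "lpoly_b N (\<lambda>k. f k + g k) z = lpoly_b N f z + lpoly_b N g z"
  and lpoly_b_diff: "lpoly_b N (\<lambda>k. f k - g k) z = lpoly_b N f z - lpoly_b N g z"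
  and lpoly_b_cmult: "lpoly_b N (\<lambda>k. c * f k) z = c * lpoly_b N f z"
  by (simp_all add: lpoly_b_def algebra_simps sum.distrib sum_subtractf sum_distrib_left)

lemma lpoly_a_mono_neutral: "\<forall>k\<ge>N. a k = 0 \<Longrightarrow> N \<le> M \<Longrightarrow> lpoly_a M a = lpoly_a N a"
  unfolding lpoly_a_def fun_eq_iff by (intro allI sum.mono_neutral_right) auto

lemma lpoly_b_mono_neutral: "\<forall>k\<ge>N. b k = 0 \<Longrightarrow> N \<le> M \<Longrightarrow> lpoly_b M b = lpoly_b N b"
  unfolding lpoly_b_def fun_eq_iff by (intro allI sum.mono_neutral_right) auto

lemma coeff_mat_mono_neutral:
  assumes "\<forall>k\<ge>N. fst ab k = 0" "\<forall>k\<ge>N. snd ab k = 0" "N \<le> M"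
  shows "coeff_mat M ab = coeff_mat N ab"
  using lpoly_a_mono_neutral[OF assms(1,3)] lpoly_b_mono_neutral[OF assms(2,3)]
  by (intro ext) (simp add: coeff_mat_def)

definition rshift :: "(nat \<Rightarrow> complex) \<Rightarrow> nat \<Rightarrow> complex" where
  "rshift f k = (case k of 0 \<Rightarrow> 0 | Suc j \<Rightarrow> f j)"

lemma rshift_simps [simp]: "rshift f 0 = 0" "rshift f (Suc j) = f j"
  by (simp_all add: rshift_def)

lemma cnj_rshift: "cnj (rshift f k) = rshift (\<lambda>j. cnj (f j)) k"
  by (cases k) simp_all

lemma lpoly_a_rshift: "lpoly_a (Suc N) (rshift f) z = inverse z * lpoly_a N f z"
  unfolding lpoly_a_def by (subst sum.lessThan_Suc_shift) (simp add: sum_distrib_left algebra_simps)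

lemma lpoly_b_rshift: "lpoly_b (Suc N) (rshift f) z = z * lpoly_b N f z"
  unfolding lpoly_b_def by (subst sum.lessThan_Suc_shift) (simp add: sum_distrib_left algebra_simps)

definition layer_scale :: "complex \<Rightarrow> complex" where
  "layer_scale g = complex_of_real (1 / sqrt (1 + (cmod g)\<^sup>2))"

lemma cnj_layer_scale [simp]: "cnj (layer_scale g) = layer_scale g"
  by (simp add: layer_scale_def)

lemma layer_scale_pos: "Re (layer_scale g) > 0"
  using add_pos_nonneg[of 1 "(cmod g)\<^sup>2"] by (simp add: layer_scale_def)

lemma nlft_factor_0:
  "nlft_factor g 0 z = mat2 (layer_scale g) (layer_scale g * g) (- (layer_scale g * cnj g)) (layer_scale g)"
  unfolding nlft_factor_def scaleR_mat2 by (simp add: layer_scale_def scaleR_conv_of_real)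

lemma layer_scale_sq: "layer_scale g * layer_scale g * (1 + g * cnj g) = 1"
proof -
  define t where "t = 1 + (cmod g)\<^sup>2"
  have "1 + g * cnj g = of_real t"
    using complex_norm_square[of g] by (simp add: t_def)
  moreover have "1 / sqrt t * (1 / sqrt t) * t = 1"
    using add_pos_nonneg[of 1 "(cmod g)\<^sup>2"] by (simp add: t_def)
  ultimately show ?thesis
    unfolding layer_scale_def t_def[symmetric] by (metis of_real_1 of_real_mult)
qed

lemma det_nlft_factor_0: "det (nlft_factor g 0 z) = 1"
  using layer_scale_sq[of g] by (simp add: nlft_factor_0 det_mat2 algebra_simps)

text \<open>If \<open>(a, b)\<close> is the NLFT of \<open>\<gamma>\<close>, then \<open>add_layer g (a, b)\<close> is the NLFT of
  \<open>g, \<gamma>\<^sub>0, \<gamma>\<^sub>1, \<dots>\<close> (\<open>coeff_mat_add_layer\<close>).\<close>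

definition add_layer :: "complex \<Rightarrow> (nat \<Rightarrow> complex) \<times> (nat \<Rightarrow> complex) \<Rightarrow> (nat \<Rightarrow> complex) \<times> (nat \<Rightarrow> complex)" where
  "add_layer g ab = ((\<lambda>k. layer_scale g * (fst ab k - g * cnj (rshift (snd ab) k))),
                     (\<lambda>k. layer_scale g * (rshift (snd ab) k + g * cnj (fst ab k))))"

lemma coeff_mat_add_layer:
  assumes z: "z \<noteq> 0" and a: "\<forall>k\<ge>N. fst ab k = 0"
  shows "nlft_factor g 0 z ** (zdiag z ** coeff_mat N ab z ** zdiag (inverse z)) =
    coeff_mat (Suc N) (add_layer g ab) z"
proof -
  obtain \<alpha> \<beta> where ab: "ab = (\<alpha>, \<beta>)" by force
  define s where "s = layer_scale g"
  let ?A = "lpoly_a N \<alpha> z" and ?B = "lpoly_b N \<beta> z"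
  let ?A' = "lpoly_b N (\<lambda>k. cnj (\<alpha> k)) z" and ?B' = "lpoly_a N (\<lambda>k. cnj (\<beta> k)) z"
  have "\<forall>k\<ge>N. \<alpha> k = 0" using a by (simp add: ab)
  then have trunc: "lpoly_a (Suc N) \<alpha> = lpoly_a N \<alpha>"
      "lpoly_b (Suc N) (\<lambda>k. cnj (\<alpha> k)) = lpoly_b N (\<lambda>k. cnj (\<alpha> k))"
    by (auto intro: lpoly_a_mono_neutral lpoly_b_mono_neutral)
  have "coeff_mat (Suc N) (add_layer g ab) z =
      mat2 (s * (?A - g * (inverse z * ?B'))) (s * (z * ?B + g * ?A'))
        (- (s * (inverse z * ?B' + cnj g * ?A))) (s * (?A' - cnj g * (z * ?B)))"
    by (simp add: coeff_mat_def add_layer_def ab s_def star_lpoly_a star_lpoly_b cnj_rshift trunc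
        lpoly_a_add lpoly_a_diff lpoly_a_cmult lpoly_b_add lpoly_b_diff lpoly_b_cmult
        lpoly_a_rshift lpoly_b_rshift)
  then show ?thesis
    using z by (simp add: coeff_mat_def ab s_def nlft_factor_0 zdiag_def mat2_mult mat2_inject
        star_lpoly_a star_lpoly_b field_simps)
qed

lemma det_coeff_mat_add_layer:
  assumes "z \<noteq> 0" and "\<forall>k\<ge>N. fst ab k = 0"
  shows "det (coeff_mat (Suc N) (add_layer g ab) z) = det (coeff_mat N ab z)"
  using assms(1) by (simp flip: coeff_mat_add_layer[OF assms]
      add: det_mul det_nlft_factor_0 det_zdiag)

section \<open>Layer stripping inverts the NLFT on \<open>S\<^sub>n\<close>\<close>

fun nlft_coeffs :: "nat \<Rightarrow> (nat \<Rightarrow> complex) \<Rightarrow> (nat \<Rightarrow> complex) \<times> (nat \<Rightarrow> complex)" where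
  "nlft_coeffs 0 \<gamma> = ((\<lambda>k. if k = 0 then 1 else 0), (\<lambda>k. 0))"
| "nlft_coeffs (Suc m) \<gamma> = add_layer (\<gamma> 0) (nlft_coeffs m (\<lambda>k. \<gamma> (Suc k)))"

lemma nlft_coeffs_support:
  "(max m 1 \<le> k \<longrightarrow> fst (nlft_coeffs m \<gamma>) k = 0) \<and> (m \<le> k \<longrightarrow> snd (nlft_coeffs m \<gamma>) k = 0)"
proof (induction m arbitrary: \<gamma> k)
  case 0
  then show ?case by simp
next
  case (Suc m)
  then show ?case
    by (cases k) (auto simp: add_layer_def)
qed

lemma nlft_mat_eq_coeff_mat_Suc:
  "z \<noteq> 0 \<Longrightarrow> nlft_mat m \<gamma> z = coeff_mat (Suc m) (nlft_coeffs m \<gamma>) z"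
proof (induction m arbitrary: \<gamma>)
  case 0
  then show ?case
    by (simp add: nlft_mat_def coeff_mat_def lpoly_a_def lpoly_b_def star_def mat_1_eq_mat2)
next
  case (Suc m)
  have "\<forall>k\<ge>Suc m. fst (nlft_coeffs m (\<lambda>k. \<gamma> (Suc k))) k = 0"
    using nlft_coeffs_support by auto
  then show ?case
    using nlft_mat_Suc[OF Suc.prems] Suc.IH[OF Suc.prems] coeff_mat_add_layer[OF Suc.prems] by simp
qed

lemma nlft_mat_eq_coeff_mat:
  assumes "z \<noteq> 0" "0 < m"
  shows "nlft_mat m \<gamma> z = coeff_mat m (nlft_coeffs m \<gamma>) z"
proof -
  have "\<forall>k\<ge>m. fst (nlft_coeffs m \<gamma>) k = 0" "\<forall>k\<ge>m. snd (nlft_coeffs m \<gamma>) k = 0"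
    using nlft_coeffs_support assms(2) by auto
  then show ?thesis
    using nlft_mat_eq_coeff_mat_Suc[OF assms(1)] coeff_mat_mono_neutral[of m _ "Suc m"] by simp
qed

lemma nlft_coeffs_fst_0:
  "fst (nlft_coeffs m \<gamma>) 0 = of_real (\<Prod>k<m. 1 / sqrt (1 + (cmod (\<gamma> k))\<^sup>2))"
proof (induction m arbitrary: \<gamma>)
  case (Suc m)
  show ?case
    unfolding prod.lessThan_Suc_shift using Suc.IH by (simp add: add_layer_def layer_scale_def)
qed simp

lemma nlft_coeffs_cong: "\<forall>k<m. \<gamma> k = \<gamma>' k \<Longrightarrow> nlft_coeffs m \<gamma> = nlft_coeffs m \<gamma>'"
proof (induction m arbitrary: \<gamma> \<gamma>')
  case (Suc m)
  then have "nlft_coeffs m (\<lambda>k. \<gamma> (Suc k)) = nlft_coeffs m (\<lambda>k. \<gamma>' (Suc k))"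
    by simp
  with Suc.prems show ?case by simp
qed simp

definition layer_coeff :: "(nat \<Rightarrow> complex) \<times> (nat \<Rightarrow> complex) \<Rightarrow> complex" where
  "layer_coeff ab = snd ab 0 / fst ab 0"

definition strip_layer :: "(nat \<Rightarrow> complex) \<times> (nat \<Rightarrow> complex) \<Rightarrow> (nat \<Rightarrow> complex) \<times> (nat \<Rightarrow> complex)" where
  "strip_layer ab =
    ((\<lambda>k. layer_scale (layer_coeff ab) * (fst ab k + layer_coeff ab * cnj (snd ab k))),
     (\<lambda>k. layer_scale (layer_coeff ab) * (snd ab (Suc k) - layer_coeff ab * cnj (fst ab (Suc k)))))"

fun inv_coeffs :: "(nat \<Rightarrow> complex) \<times> (nat \<Rightarrow> complex) \<Rightarrow> nat \<Rightarrow> complex" where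
  "inv_coeffs ab 0 = layer_coeff ab"
| "inv_coeffs ab (Suc k) = inv_coeffs (strip_layer ab) k"

lemma layer_coeff_add_layer:
  assumes "Im (fst ab 0) = 0" "fst ab 0 \<noteq> 0"
  shows "layer_coeff (add_layer g ab) = g"
proof -
  have "cnj (fst ab 0) = fst ab 0" "layer_scale g \<noteq> 0"
    using assms layer_scale_pos[of g] by (auto simp: complex_eq_iff)
  then show ?thesis
    using assms(2) by (simp add: layer_coeff_def add_layer_def)
qed

lemma strip_layer_add_layer:
  assumes "Im (fst ab 0) = 0" "fst ab 0 \<noteq> 0"
  shows "strip_layer (add_layer g ab) = ab"
proof -
  have "fst (strip_layer (add_layer g ab)) k = layer_scale g * layer_scale g * (1 + g * cnj g) * fst ab k"
    "snd (strip_layer (add_layer g ab)) k = layer_scale g * layer_scale g * (1 + g * cnj g) * snd ab k" for k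
    unfolding strip_layer_def layer_coeff_add_layer[OF assms] by (simp_all add: add_layer_def algebra_simps)
  then show ?thesis
    by (simp add: layer_scale_sq prod_eq_iff fun_eq_iff)
qed

lemma add_layer_strip_layer:
  assumes "Im (fst ab 0) = 0" "fst ab 0 \<noteq> 0"
  shows "add_layer (layer_coeff ab) (strip_layer ab) = ab"
proof -
  define g where "g = layer_coeff ab"
  have b0: "snd ab 0 = g * fst ab 0" and a0: "cnj (fst ab 0) = fst ab 0"
    using assms by (simp_all add: g_def layer_coeff_def complex_eq_iff)
  have "fst (add_layer g (strip_layer ab)) k = layer_scale g * layer_scale g * (1 + g * cnj g) * fst ab k"
    "snd (add_layer g (strip_layer ab)) k = layer_scale g * layer_scale g * (1 + g * cnj g) * snd ab k" for k
    by (cases k; simp add: add_layer_def strip_layer_def g_def[symmetric] b0 a0 algebra_simps)+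
  then show ?thesis
    by (simp add: layer_scale_sq prod_eq_iff fun_eq_iff g_def)
qed

lemma nlft_coeffs_fst_0_real: "Im (fst (nlft_coeffs m \<gamma>) 0) = 0"
  unfolding nlft_coeffs_fst_0 Im_complex_of_real ..

lemma nlft_coeffs_fst_0_pos: "Re (fst (nlft_coeffs m \<gamma>) 0) > 0"
  unfolding nlft_coeffs_fst_0 Re_complex_of_real by (auto intro!: prod_pos add_pos_nonneg)

lemma nlft_coeffs_fst_0_nonzero: "fst (nlft_coeffs m \<gamma>) 0 \<noteq> 0"
  using nlft_coeffs_fst_0_pos[of m \<gamma>] by auto

lemma inv_coeffs_nlft_coeffs: "k < m \<Longrightarrow> inv_coeffs (nlft_coeffs m \<gamma>) k = \<gamma> k"
proof (induction k arbitrary: m \<gamma>)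
  case 0
  then obtain m' where "m = Suc m'" by (cases m) auto
  then show ?case
    by (simp add: layer_coeff_add_layer nlft_coeffs_fst_0_real nlft_coeffs_fst_0_nonzero)
next
  case (Suc k)
  then obtain m' where "m = Suc m'" by (cases m) auto
  then show ?case
    using Suc by (simp add: strip_layer_add_layer nlft_coeffs_fst_0_real nlft_coeffs_fst_0_nonzero)
qed

lemma inv_coeffs_cong:
  "\<forall>j\<le>k. fst p j = fst q j \<and> snd p j = snd q j \<Longrightarrow> inv_coeffs p k = inv_coeffs q k"
proof (induction k arbitrary: p q)
  case 0
  then show ?case by (simp add: layer_coeff_def)
next
  case (Suc k)
  have "layer_coeff p = layer_coeff q"
    using Suc.prems by (simp add: layer_coeff_def)
  then have "\<forall>j\<le>k. fst (strip_layer p) j = fst (strip_layer q) j \<and> snd (strip_layer p) j = snd (strip_layer q) j"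
    using Suc.prems by (simp add: strip_layer_def)
  then show ?case by (simp add: Suc.IH)
qed

lemma isCont_vanishing_punctured:
  fixes f :: "complex \<Rightarrow> complex"
  assumes "isCont f 0" and "\<And>z. z \<noteq> 0 \<Longrightarrow> f z = 0"
  shows "f 0 = 0"
proof -
  have "(f \<longlongrightarrow> 0) (at 0)"
    by (rule tendsto_eventually) (auto simp: eventually_at_filter assms(2))
  with assms(1) show ?thesis
    by (metis LIM_unique isCont_def)
qed

lemma lpoly_b_coeffs_eq:
  assumes "\<And>z. z \<noteq> 0 \<Longrightarrow> lpoly_b n b z = lpoly_b n b' z" and "k < n"
  shows "b k = b' k"
proof -
  obtain N where n: "n = Suc N" using assms(2) by (cases n) auto
  define P where "P z = (\<Sum>j\<le>N. (b j - b' j) * z ^ j)" for z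
  have "P z = lpoly_b n b z - lpoly_b n b' z" for z
    by (simp add: P_def n lpoly_b_def lessThan_Suc_atMost algebra_simps sum_subtractf)
  then have "P z = 0" if "z \<noteq> 0" for z
    using assms(1) that by simp
  moreover have "isCont P 0"
    unfolding P_def by (intro continuous_intros)
  ultimately have "P z = 0" for z
    using isCont_vanishing_punctured[of P] by (cases "z = 0") auto
  then show ?thesis
    using assms(2) Poly_Roots.polyfun_eq_0[of "\<lambda>j. b j - b' j" N] by (simp add: P_def n)
qed

lemma lpoly_a_conv_lpoly_b: "lpoly_a N a z = lpoly_b N a (inverse z)"
  by (simp add: lpoly_a_def lpoly_b_def)

lemma lpoly_a_coeffs_eq:
  assumes "\<And>z. z \<noteq> 0 \<Longrightarrow> lpoly_a n a z = lpoly_a n a' z" and "k < n"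
  shows "a k = a' k"
proof (rule lpoly_b_coeffs_eq[OF _ assms(2)])
  fix z :: complex
  assume "z \<noteq> 0"
  then show "lpoly_b n a z = lpoly_b n a' z"
    using assms(1)[of "inverse z"] by (simp add: lpoly_a_conv_lpoly_b)
qed

lemma has_nlft_imp_eq_inv_coeffs:
  assumes "0 < n" and "has_nlft n \<gamma> p"
  shows "\<gamma> = (\<lambda>k. if k < n then inv_coeffs p k else 0)"
proof
  fix k
  let ?c = "nlft_coeffs n \<gamma>"
  have "coeff_mat n p z = coeff_mat n ?c z" if "z \<noteq> 0" for z
    using assms that nlft_mat_eq_coeff_mat by (simp add: has_nlft_iff_coeff_mat)
  then have "lpoly_a n (fst p) z = lpoly_a n (fst ?c) z \<and> lpoly_b n (snd p) z = lpoly_b n (snd ?c) z"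
    if "z \<noteq> 0" for z
    using that by (simp add: coeff_mat_def mat2_inject)
  then have "fst p j = fst ?c j \<and> snd p j = snd ?c j" if "j < n" for j
    using that lpoly_a_coeffs_eq lpoly_b_coeffs_eq by blast
  then have "k < n \<Longrightarrow> inv_coeffs p k = inv_coeffs ?c k"
    by (intro inv_coeffs_cong) auto
  then show "\<gamma> k = (if k < n then inv_coeffs p k else 0)"
    using assms(2) by (simp add: inv_coeffs_nlft_coeffs has_nlft_def)
qed

lemma mem_S_set_iff:
  "p \<in> S_set n \<longleftrightarrow> (\<forall>k\<ge>n. fst p k = 0) \<and> (\<forall>k\<ge>n. snd p k = 0) \<and>
     Im (fst p 0) = 0 \<and> Re (fst p 0) > 0 \<and> (\<forall>z. z \<noteq> 0 \<longrightarrow> det (coeff_mat n p z) = 1)"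
  by (cases p) (simp add: S_set_def det_coeff_mat)

lemma S_set_fst_0:
  assumes "p \<in> S_set n"
  shows "Im (fst p 0) = 0" and "Re (fst p 0) > 0" and "fst p 0 \<noteq> 0"
  using assms by (auto simp: S_set_def)

lemma power_mult_lpoly_a:
  "z \<noteq> 0 \<Longrightarrow> z ^ n * lpoly_a (Suc n) f z = (\<Sum>k<Suc n. f k * z ^ (n - k))"
  unfolding lpoly_a_def sum_distrib_left
  by (intro sum.cong) (auto simp: power_diff power_inverse divide_inverse algebra_simps)

text \<open>Comparing the coefficients of \<open>z\<^sup>n\<close> in \<open>z\<^sup>n (a a\<^sup>* + b b\<^sup>*) = z\<^sup>n\<close>.\<close>

lemma S_set_top_coeff:
  assumes "(a, b) \<in> S_set (Suc n)" and "0 < n"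
  shows "a n * cnj (a 0) + b 0 * cnj (b n) = 0"
proof -
  let ?rev = "\<lambda>f z. \<Sum>k<Suc n. f k * z ^ (n - k)"
  define P where "P z = ?rev a z * lpoly_b (Suc n) (\<lambda>k. cnj (a k)) z
      + lpoly_b (Suc n) b z * ?rev (\<lambda>k. cnj (b k)) z - z ^ n" for z
  have "P z = 0" if "z \<noteq> 0" for z
  proof -
    have "P z = z ^ n * lpoly_a (Suc n) a z * lpoly_b (Suc n) (\<lambda>k. cnj (a k)) z
        + lpoly_b (Suc n) b z * (z ^ n * lpoly_a (Suc n) (\<lambda>k. cnj (b k)) z) - z ^ n"
      unfolding P_def power_mult_lpoly_a[OF that] ..
    also have "\<dots> = z ^ n * (det (coeff_mat (Suc n) (a, b) z) - 1)"
      by (simp add: det_coeff_mat star_lpoly_a star_lpoly_b algebra_simps)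
    finally show ?thesis
      using assms(1) that by (simp add: mem_S_set_iff)
  qed
  moreover have "isCont P 0"
    unfolding P_def lpoly_b_def by (intro continuous_intros)
  ultimately have "P 0 = 0"
    by (rule isCont_vanishing_punctured[rotated])
  moreover have "?rev f 0 = f n" for f :: "nat \<Rightarrow> complex"
    by (simp add: sum.neutral)
  moreover have "lpoly_b (Suc n) f 0 = f 0" for f
    unfolding lpoly_b_def by (subst sum.lessThan_Suc_shift) simp
  ultimately show ?thesis
    using assms(2) by (simp add: P_def)
qed

lemma strip_layer_fst_0:
  assumes "Im (fst p 0) = 0" and "Re (fst p 0) > 0"
  shows "fst (strip_layer p) 0 = of_real (Re (fst p 0) * sqrt (1 + (cmod (layer_coeff p))\<^sup>2))"
proof -
  define r where "r = Re (fst p 0)"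
  define t where "t = 1 + (cmod (layer_coeff p))\<^sup>2"
  have a0: "fst p 0 = of_real r"
    using assms(1) by (simp add: r_def complex_eq_iff)
  have "r \<noteq> 0"
    using assms(2) by (simp add: r_def)
  then have "snd p 0 = layer_coeff p * of_real r"
    by (simp add: layer_coeff_def a0)
  then have sum: "fst p 0 + layer_coeff p * cnj (snd p 0) = of_real (r * t)"
    using complex_norm_square[of "layer_coeff p"] by (simp add: a0 t_def algebra_simps)
  have "t / sqrt t = sqrt t"
    by (simp add: t_def real_div_sqrt)
  then have "1 / sqrt t * (r * t) = r * sqrt t"
    by (metis times_divide_eq_left times_divide_eq_right mult.commute mult_1)
  then show ?thesis
    unfolding strip_layer_def fst_conv layer_scale_def t_def[symmetric] r_def[symmetric] sum
      of_real_mult[symmetric] by simp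
qed

lemma strip_layer_fst_0_real: "Im (fst p 0) = 0 \<Longrightarrow> Re (fst p 0) > 0 \<Longrightarrow> Im (fst (strip_layer p) 0) = 0"
  by (simp add: strip_layer_fst_0)

lemma strip_layer_fst_0_ge:
  assumes "Im (fst p 0) = 0" and "Re (fst p 0) > 0"
  shows "Re (fst (strip_layer p) 0) \<ge> Re (fst p 0)"
  using assms by (simp add: strip_layer_fst_0)

lemma strip_layer_in_S_set:
  assumes p: "p \<in> S_set (Suc n)"
  shows "strip_layer p \<in> S_set (Suc n)"
proof -
  have supp: "\<forall>k\<ge>Suc n. fst p k = 0" "\<forall>k\<ge>Suc n. snd p k = 0"
    using p by (simp_all add: mem_S_set_iff)
  then have supp': "\<forall>k\<ge>Suc n. fst (strip_layer p) k = 0" "\<forall>k\<ge>Suc n. snd (strip_layer p) k = 0"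
    by (simp_all add: strip_layer_def)
  have "det (coeff_mat (Suc n) (strip_layer p) z) = 1" if z: "z \<noteq> 0" for z
  proof -
    have "det (coeff_mat (Suc n) (strip_layer p) z) =
        det (coeff_mat (Suc (Suc n)) (add_layer (layer_coeff p) (strip_layer p)) z)"
      using det_coeff_mat_add_layer[OF z supp'(1)] by simp
    also have "\<dots> = det (coeff_mat (Suc (Suc n)) p z)"
      using add_layer_strip_layer[OF S_set_fst_0(1,3)[OF p]] by simp
    also have "\<dots> = det (coeff_mat (Suc n) p z)"
      using coeff_mat_mono_neutral[OF supp, of "Suc (Suc n)"] by simp
    finally show ?thesis
      using p z by (simp add: mem_S_set_iff)
  qed
  moreover have "Im (fst (strip_layer p) 0) = 0" "Re (fst (strip_layer p) 0) > 0"
    using strip_layer_fst_0_real[of p] strip_layer_fst_0_ge[of p] S_set_fst_0[OF p] by auto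
  ultimately show ?thesis
    using supp' by (simp add: mem_S_set_iff)
qed

lemma S_set_truncate:
  assumes "(a, b) \<in> S_set (Suc n)" and "a n = 0" and "b n = 0"
  shows "(a, b) \<in> S_set n"
proof -
  have "\<forall>k\<ge>Suc n. a k = 0" "\<forall>k\<ge>Suc n. b k = 0"
    using assms(1) by (simp_all add: mem_S_set_iff)
  with assms(2,3) have "\<forall>k\<ge>n. a k = 0" "\<forall>k\<ge>n. b k = 0"
    by (metis Suc_leI le_neq_implies_less)+
  then have "coeff_mat (Suc n) (a, b) = coeff_mat n (a, b)"
    by (intro coeff_mat_mono_neutral) auto
  then show ?thesis
    using assms(1) \<open>\<forall>k\<ge>n. a k = 0\<close> \<open>\<forall>k\<ge>n. b k = 0\<close> by (simp add: mem_S_set_iff)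
qed

lemma strip_layer_in_S_set_pred:
  assumes p: "p \<in> S_set (Suc n)" and "0 < n"
  shows "strip_layer p \<in> S_set n"
proof -
  obtain a b where ab: "p = (a, b)" by force
  have S: "\<forall>k\<ge>Suc n. a k = 0" "\<forall>k\<ge>Suc n. b k = 0" "cnj (a 0) = a 0" "a 0 \<noteq> 0"
    using p by (auto simp: ab mem_S_set_iff complex_eq_iff)
  have "a n + layer_coeff p * cnj (b n) = (a n * cnj (a 0) + b 0 * cnj (b n)) / a 0"
    using S(3,4) by (simp add: ab layer_coeff_def field_simps)
  then have "fst (strip_layer p) n = 0"
    using S_set_top_coeff[OF p[unfolded ab] assms(2)] by (simp add: strip_layer_def ab)
  moreover have "snd (strip_layer p) n = 0"
    using S(1,2) by (simp add: strip_layer_def ab)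
  ultimately show ?thesis
    using S_set_truncate strip_layer_in_S_set[OF p] by (metis prod.collapse)
qed

lemma S_set_1_snd_0:
  assumes "(a, \<lambda>k. 0) \<in> S_set 1"
  shows "a = (\<lambda>k. if k = 0 then 1 else 0)"
proof -
  define r where "r = Re (a 0)"
  have a: "\<forall>k\<ge>1. a k = 0" "a 0 = of_real r" "r > 0" "det (coeff_mat 1 (a, \<lambda>k. 0) 1) = 1"
    using assms by (auto simp: mem_S_set_iff complex_eq_iff r_def)
  then have "of_real (r\<^sup>2) = (1 :: complex)"
    by (simp add: det_coeff_mat lpoly_a_def lpoly_b_def star_def power2_eq_square)
  then have "r = 1"
    using a(3) by (simp only: of_real_eq_1_iff power2_eq_1_iff) simp
  then show ?thesis
    using a(1,2) by (auto simp: fun_eq_iff)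
qed

lemma nlft_coeffs_inv_coeffs:
  "p \<in> S_set (Suc m) \<Longrightarrow> nlft_coeffs (Suc m) (inv_coeffs p) = p"
proof (induction m arbitrary: p)
  case 0
  have "strip_layer p = nlft_coeffs 0 (inv_coeffs (strip_layer p))"
  proof -
    have "snd (strip_layer p) = (\<lambda>k. 0)"
      using "0" by (auto simp: fun_eq_iff strip_layer_def mem_S_set_iff)
    then have "strip_layer p = (fst (strip_layer p), \<lambda>k. 0)"
      by (metis prod.collapse)
    then show ?thesis
      using strip_layer_in_S_set[OF "0"] S_set_1_snd_0[of "fst (strip_layer p)"] by simp
  qed
  then show ?case
    using add_layer_strip_layer[OF S_set_fst_0(1,3)[OF "0"]] by simp
next
  case (Suc m)
  have "nlft_coeffs (Suc m) (\<lambda>k. inv_coeffs p (Suc k)) = strip_layer p"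
    using Suc.IH[OF strip_layer_in_S_set_pred[OF Suc.prems]] by simp
  then show ?case
    using add_layer_strip_layer[OF S_set_fst_0(1,3)[OF Suc.prems]] by simp
qed

lemma has_nlft_inv_coeffs:
  assumes "0 < n" and "p \<in> S_set n"
  shows "has_nlft n (\<lambda>k. if k < n then inv_coeffs p k else 0) p"
proof -
  obtain m where m: "n = Suc m" using assms(1) by (cases n) auto
  have "nlft_coeffs n (\<lambda>k. if k < n then inv_coeffs p k else 0) = nlft_coeffs n (inv_coeffs p)"
    by (rule nlft_coeffs_cong) simp
  also have "\<dots> = p"
    using nlft_coeffs_inv_coeffs assms(2) by (simp add: m)
  finally show ?thesis
    using assms(1) by (simp add: has_nlft_iff_coeff_mat nlft_mat_eq_coeff_mat)
qed

lemma inv_nlft_eq_inv_coeffs: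
  assumes "0 < n" and "p \<in> S_set n"
  shows "inv_nlft n p = (\<lambda>k. if k < n then inv_coeffs p k else 0)"
  unfolding inv_nlft_def
  using has_nlft_inv_coeffs[OF assms] has_nlft_imp_eq_inv_coeffs[OF assms(1)] by blast

section \<open>Bounded Lipschitz functions\<close>

definition bounded_lipschitz_on :: "'p set \<Rightarrow> ('p \<Rightarrow> 'p \<Rightarrow> real) \<Rightarrow> ('p \<Rightarrow> complex) \<Rightarrow> bool" where
  "bounded_lipschitz_on S d f \<longleftrightarrow>
    (\<exists>B\<ge>0. \<forall>p\<in>S. cmod (f p) \<le> B) \<and> (\<exists>L\<ge>0. \<forall>p\<in>S. \<forall>q\<in>S. cmod (f p - f q) \<le> L * d p q)"

lemma bounded_lipschitz_onI:
  assumes "B \<ge> 0" "L \<ge> 0" "\<And>p. p \<in> S \<Longrightarrow> cmod (f p) \<le> B"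
    "\<And>p q. p \<in> S \<Longrightarrow> q \<in> S \<Longrightarrow> cmod (f p - f q) \<le> L * d p q"
  shows "bounded_lipschitz_on S d f"
  using assms unfolding bounded_lipschitz_on_def by blast

lemma bounded_lipschitz_onE:
  assumes "bounded_lipschitz_on S d f"
  obtains B L where "B \<ge> 0" "L \<ge> 0" "\<And>p. p \<in> S \<Longrightarrow> cmod (f p) \<le> B"
    "\<And>p q. p \<in> S \<Longrightarrow> q \<in> S \<Longrightarrow> cmod (f p - f q) \<le> L * d p q"
  using assms unfolding bounded_lipschitz_on_def by blast

lemma bounded_lipschitz_on_add:
  assumes "bounded_lipschitz_on S d f" "bounded_lipschitz_on S d g"
  shows "bounded_lipschitz_on S d (\<lambda>p. f p + g p)"
proof -
  obtain B1 L1 B2 L2 where f: "B1 \<ge> 0" "L1 \<ge> 0" "\<And>p. p \<in> S \<Longrightarrow> cmod (f p) \<le> B1"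
      "\<And>p q. p \<in> S \<Longrightarrow> q \<in> S \<Longrightarrow> cmod (f p - f q) \<le> L1 * d p q"
    and g: "B2 \<ge> 0" "L2 \<ge> 0" "\<And>p. p \<in> S \<Longrightarrow> cmod (g p) \<le> B2"
      "\<And>p q. p \<in> S \<Longrightarrow> q \<in> S \<Longrightarrow> cmod (g p - g q) \<le> L2 * d p q"
    using assms by (metis bounded_lipschitz_onE)
  show ?thesis
  proof (rule bounded_lipschitz_onI[of "B1 + B2" "L1 + L2"])
    show "cmod (f p + g p) \<le> B1 + B2" if "p \<in> S" for p
      using f(3)[OF that] g(3)[OF that] norm_triangle_ineq[of "f p" "g p"] by linarith
    show "cmod (f p + g p - (f q + g q)) \<le> (L1 + L2) * d p q" if "p \<in> S" "q \<in> S" for p q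
      using f(4)[OF that] g(4)[OF that] norm_triangle_ineq[of "f p - f q" "g p - g q"]
      by (simp add: algebra_simps)
  qed (use f g in auto)
qed

lemma bounded_lipschitz_on_uminus:
  "bounded_lipschitz_on S d f \<Longrightarrow> bounded_lipschitz_on S d (\<lambda>p. - f p)"
  unfolding bounded_lipschitz_on_def by (simp add: norm_minus_commute)

lemma bounded_lipschitz_on_diff:
  "bounded_lipschitz_on S d f \<Longrightarrow> bounded_lipschitz_on S d g \<Longrightarrow> bounded_lipschitz_on S d (\<lambda>p. f p - g p)"
  using bounded_lipschitz_on_add[OF _ bounded_lipschitz_on_uminus, of S d f g] by simp

lemma bounded_lipschitz_on_cnj:
  "bounded_lipschitz_on S d f \<Longrightarrow> bounded_lipschitz_on S d (\<lambda>p. cnj (f p))"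
  unfolding bounded_lipschitz_on_def by (simp flip: complex_cnj_diff)

lemma bounded_lipschitz_on_mult:
  assumes "bounded_lipschitz_on S d f" "bounded_lipschitz_on S d g"
  shows "bounded_lipschitz_on S d (\<lambda>p. f p * g p)"
proof -
  obtain B1 L1 B2 L2 where f: "B1 \<ge> 0" "L1 \<ge> 0" "\<And>p. p \<in> S \<Longrightarrow> cmod (f p) \<le> B1"
      "\<And>p q. p \<in> S \<Longrightarrow> q \<in> S \<Longrightarrow> cmod (f p - f q) \<le> L1 * d p q"
    and g: "B2 \<ge> 0" "L2 \<ge> 0" "\<And>p. p \<in> S \<Longrightarrow> cmod (g p) \<le> B2"
      "\<And>p q. p \<in> S \<Longrightarrow> q \<in> S \<Longrightarrow> cmod (g p - g q) \<le> L2 * d p q"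
    using assms by (metis bounded_lipschitz_onE)
  show ?thesis
  proof (rule bounded_lipschitz_onI[of "B1 * B2" "B1 * L2 + B2 * L1"])
    show "cmod (f p * g p) \<le> B1 * B2" if "p \<in> S" for p
      unfolding norm_mult using f(3)[OF that] g(3)[OF that] f(1) by (intro mult_mono) auto
    show "cmod (f p * g p - f q * g q) \<le> (B1 * L2 + B2 * L1) * d p q" if "p \<in> S" "q \<in> S" for p q
    proof -
      have "f p * g p - f q * g q = f p * (g p - g q) + g q * (f p - f q)"
        by (simp add: algebra_simps)
      then have "cmod (f p * g p - f q * g q) \<le> cmod (f p) * cmod (g p - g q) + cmod (g q) * cmod (f p - f q)"
        by (metis norm_mult norm_triangle_ineq)
      also have "\<dots> \<le> B1 * (L2 * d p q) + B2 * (L1 * d p q)"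
        using f(1,3,4) g(1,3,4) that by (intro add_mono mult_mono) auto
      finally show ?thesis
        by (simp add: algebra_simps)
    qed
  qed (use f g in auto)
qed

lemma bounded_lipschitz_on_inverse:
  assumes "bounded_lipschitz_on S d f" and "e > 0" and "\<And>p. p \<in> S \<Longrightarrow> cmod (f p) \<ge> e"
  shows "bounded_lipschitz_on S d (\<lambda>p. inverse (f p))"
proof -
  obtain L where L: "L \<ge> 0" "\<And>p q. p \<in> S \<Longrightarrow> q \<in> S \<Longrightarrow> cmod (f p - f q) \<le> L * d p q"
    using assms(1) by (metis bounded_lipschitz_onE)
  show ?thesis
  proof (rule bounded_lipschitz_onI[of "1 / e" "L / (e * e)"])
    show "cmod (inverse (f p)) \<le> 1 / e" if "p \<in> S" for p
      using assms(2) assms(3)[OF that] frac_le[of 1 1 e "cmod (f p)"] by (simp add: norm_inverse divide_inverse)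
    show "cmod (inverse (f p) - inverse (f q)) \<le> L / (e * e) * d p q" if "p \<in> S" "q \<in> S" for p q
    proof -
      have ee: "e * e \<le> cmod (f p) * cmod (f q)"
        using assms(2,3) that by (intro mult_mono) auto
      have "f p \<noteq> 0" "f q \<noteq> 0"
        using assms(2,3) that by force+
      then have "cmod (inverse (f p) - inverse (f q)) = cmod (f p - f q) / (cmod (f p) * cmod (f q))"
        by (simp add: inverse_diff_inverse norm_mult norm_inverse norm_minus_commute divide_inverse)
      also have "\<dots> \<le> cmod (f p - f q) / (e * e)"
        using ee assms(2) by (intro divide_left_mono) (auto intro!: mult_pos_pos order.strict_trans2[OF _ ee])
      also have "\<dots> \<le> L * d p q / (e * e)"
        using L(2)[OF that] by (intro divide_right_mono) auto
      finally show ?thesis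
        by simp
    qed
  qed (use L assms(2) in auto)
qed

lemma inverse_sqrt_one_plus_diff_le:
  fixes x y :: real
  assumes "x \<ge> 0" "y \<ge> 0"
  shows "\<bar>1 / sqrt (1 + x) - 1 / sqrt (1 + y)\<bar> \<le> \<bar>x - y\<bar>"
proof -
  define u v where "u = sqrt (1 + x)" and "v = sqrt (1 + y)"
  have uv: "u \<ge> 1" "v \<ge> 1" "u * u = 1 + x" "v * v = 1 + y"
    using assms by (simp_all add: u_def v_def)
  have "\<bar>1 / u - 1 / v\<bar> = \<bar>v - u\<bar> / (u * v)"
    using uv by (simp add: field_simps abs_div)
  also have "\<dots> \<le> \<bar>v - u\<bar> / 1"
    using uv mult_mono[of 1 u 1 v] by (intro divide_left_mono) auto
  also have "\<dots> \<le> \<bar>v - u\<bar> * (v + u)"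
    using uv by (simp add: mult_le_cancel_left1)
  also have "\<dots> = \<bar>(v - u) * (v + u)\<bar>"
    using uv by (simp add: abs_mult)
  also have "(v - u) * (v + u) = y - x"
    using uv by (simp add: algebra_simps)
  finally show ?thesis
    by (simp add: u_def v_def abs_minus_commute)
qed

lemma norm_layer_scale_le_1: "cmod (layer_scale g) \<le> 1"
proof -
  have "1 \<le> sqrt (1 + (cmod g)\<^sup>2)"
    by simp
  then show ?thesis
    unfolding layer_scale_def norm_of_real by (simp add: divide_le_eq_1 add_pos_nonneg)
qed

lemma norm_layer_scale_diff_le: "cmod (layer_scale g - layer_scale h) \<le> (cmod g + cmod h) * cmod (g - h)"
proof -
  have "cmod (layer_scale g - layer_scale h) \<le> \<bar>(cmod g)\<^sup>2 - (cmod h)\<^sup>2\<bar>"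
    unfolding layer_scale_def norm_of_real[symmetric] of_real_diff[symmetric]
    by (simp only: norm_of_real) (rule inverse_sqrt_one_plus_diff_le; simp)
  also have "(cmod g)\<^sup>2 - (cmod h)\<^sup>2 = (cmod g + cmod h) * (cmod g - cmod h)"
    by (simp add: power2_eq_square algebra_simps)
  also have "\<bar>\<dots>\<bar> = (cmod g + cmod h) * \<bar>cmod g - cmod h\<bar>"
    by (simp add: abs_mult)
  also have "\<dots> \<le> (cmod g + cmod h) * cmod (g - h)"
    by (intro mult_left_mono norm_triangle_ineq3) auto
  finally show ?thesis .
qed

lemma bounded_lipschitz_on_layer_scale:
  assumes "bounded_lipschitz_on S d f"
  shows "bounded_lipschitz_on S d (\<lambda>p. layer_scale (f p))"
proof -
  obtain B L where f: "B \<ge> 0" "L \<ge> 0" "\<And>p. p \<in> S \<Longrightarrow> cmod (f p) \<le> B"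
      "\<And>p q. p \<in> S \<Longrightarrow> q \<in> S \<Longrightarrow> cmod (f p - f q) \<le> L * d p q"
    using assms by (metis bounded_lipschitz_onE)
  show ?thesis
  proof (rule bounded_lipschitz_onI[of 1 "2 * B * L"])
    show "cmod (layer_scale (f p) - layer_scale (f q)) \<le> 2 * B * L * d p q" if "p \<in> S" "q \<in> S" for p q
    proof -
      have "cmod (layer_scale (f p) - layer_scale (f q)) \<le> (cmod (f p) + cmod (f q)) * cmod (f p - f q)"
        by (rule norm_layer_scale_diff_le)
      also have "\<dots> \<le> (2 * B) * (L * d p q)"
        using f(1) f(3)[OF that(1)] f(3)[OF that(2)] f(4)[OF that] by (intro mult_mono) auto
      finally show ?thesis
        by (simp add: algebra_simps)
    qed
  qed (use f norm_layer_scale_le_1 in auto)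
qed

lemma bounded_lipschitz_on_compose:
  assumes "bounded_lipschitz_on T e f" and "h ` S \<subseteq> T" and "M \<ge> 0"
    and "\<And>p q. p \<in> S \<Longrightarrow> q \<in> S \<Longrightarrow> e (h p) (h q) \<le> M * d p q"
  shows "bounded_lipschitz_on S d (\<lambda>p. f (h p))"
proof -
  obtain B L where f: "B \<ge> 0" "L \<ge> 0" "\<And>p. p \<in> T \<Longrightarrow> cmod (f p) \<le> B"
      "\<And>p q. p \<in> T \<Longrightarrow> q \<in> T \<Longrightarrow> cmod (f p - f q) \<le> L * e p q"
    using assms(1) by (metis bounded_lipschitz_onE)
  show ?thesis
  proof (rule bounded_lipschitz_onI[of B "L * M"])
    show "cmod (f (h p) - f (h q)) \<le> L * M * d p q" if "p \<in> S" "q \<in> S" for p q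
    proof -
      have "h p \<in> T" "h q \<in> T"
        using assms(2) that by auto
      then have "cmod (f (h p) - f (h q)) \<le> L * e (h p) (h q)"
        by (rule f(4))
      also have "\<dots> \<le> L * (M * d p q)"
        using assms(4)[OF that] f(2) by (rule mult_left_mono)
      finally show ?thesis
        by (simp add: mult.assoc)
    qed
  qed (use f assms in auto)
qed

lemma lipschitz_bound_sum:
  fixes g :: "'j \<Rightarrow> 'p \<Rightarrow> 'p \<Rightarrow> real"
  assumes "finite A" and "\<And>j. j \<in> A \<Longrightarrow> \<exists>L\<ge>0. \<forall>p\<in>S. \<forall>q\<in>S. g j p q \<le> L * d p q"
  shows "\<exists>L\<ge>0. \<forall>p\<in>S. \<forall>q\<in>S. (\<Sum>j\<in>A. g j p q) \<le> L * d p q"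
proof -
  obtain L where L: "\<And>j. j \<in> A \<Longrightarrow> L j \<ge> 0 \<and> (\<forall>p\<in>S. \<forall>q\<in>S. g j p q \<le> L j * d p q)"
    using assms(2) by metis
  have "(\<Sum>j\<in>A. g j p q) \<le> (\<Sum>j\<in>A. L j) * d p q" if "p \<in> S" "q \<in> S" for p q
    unfolding sum_distrib_right using L that by (intro sum_mono) auto
  moreover have "(\<Sum>j\<in>A. L j) \<ge> 0"
    using L by (intro sum_nonneg) auto
  ultimately show ?thesis
    by blast
qed

section \<open>Lipschitz continuity of the inverse NLFT\<close>

text \<open>The \<open>k\<close>-th inverse coefficient only depends on the coefficients up to index \<open>k\<close>
  (\<open>inv_coeffs_cong\<close>), so it is estimated against \<open>dist_upto k\<close>.\<close>

definition coeff_box :: "nat \<Rightarrow> real \<Rightarrow> real \<Rightarrow> ((nat \<Rightarrow> complex) \<times> (nat \<Rightarrow> complex)) set" where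
  "coeff_box k C \<delta> = {p. Im (fst p 0) = 0 \<and> Re (fst p 0) > \<delta> \<and>
     (\<forall>j\<le>k. cmod (fst p j) \<le> C \<and> cmod (snd p j) \<le> C)}"

definition dist_upto :: "nat \<Rightarrow> (nat \<Rightarrow> complex) \<times> (nat \<Rightarrow> complex) \<Rightarrow> (nat \<Rightarrow> complex) \<times> (nat \<Rightarrow> complex) \<Rightarrow> real" where
  "dist_upto k p q = (\<Sum>j\<le>k. cmod (fst p j - fst q j) + cmod (snd p j - snd q j))"

lemma coord_le_dist_upto:
  assumes "j \<le> k"
  shows "cmod (fst p j - fst q j) \<le> dist_upto k p q" and "cmod (snd p j - snd q j) \<le> dist_upto k p q"
proof -
  have "cmod (fst p j - fst q j) + cmod (snd p j - snd q j) \<le> dist_upto k p q"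
    unfolding dist_upto_def using assms
    by (intro member_le_sum[where f = "\<lambda>j. cmod (fst p j - fst q j) + cmod (snd p j - snd q j)"]) auto
  then show "cmod (fst p j - fst q j) \<le> dist_upto k p q" "cmod (snd p j - snd q j) \<le> dist_upto k p q"
    using norm_ge_zero[of "fst p j - fst q j"] norm_ge_zero[of "snd p j - snd q j"] by linarith+
qed

lemma bounded_lipschitz_on_coord:
  assumes "j \<le> k"
  shows "bounded_lipschitz_on (coeff_box k C \<delta>) (dist_upto k) (\<lambda>p. fst p j)"
    and "bounded_lipschitz_on (coeff_box k C \<delta>) (dist_upto k) (\<lambda>p. snd p j)"
proof -
  show "bounded_lipschitz_on (coeff_box k C \<delta>) (dist_upto k) (\<lambda>p. fst p j)"
    by (rule bounded_lipschitz_onI[of "\<bar>C\<bar>" 1]) (use assms coord_le_dist_upto[OF assms] in \<open>auto simp: coeff_box_def\<close>)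
  show "bounded_lipschitz_on (coeff_box k C \<delta>) (dist_upto k) (\<lambda>p. snd p j)"
    by (rule bounded_lipschitz_onI[of "\<bar>C\<bar>" 1]) (use assms coord_le_dist_upto[OF assms] in \<open>auto simp: coeff_box_def\<close>)
qed

lemma coeff_box_fst_0: "p \<in> coeff_box k C \<delta> \<Longrightarrow> cmod (fst p 0) \<ge> \<delta>"
  unfolding coeff_box_def using abs_Re_le_cmod[of "fst p 0"] by auto

lemma bounded_lipschitz_on_layer_coeff:
  assumes "\<delta> > 0"
  shows "bounded_lipschitz_on (coeff_box k C \<delta>) (dist_upto k) layer_coeff"
proof -
  have eq: "layer_coeff = (\<lambda>p. snd p 0 * inverse (fst p 0))"
    by (auto simp: fun_eq_iff layer_coeff_def divide_inverse)
  show ?thesis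
    unfolding eq by (intro bounded_lipschitz_on_mult bounded_lipschitz_on_coord
        bounded_lipschitz_on_inverse[OF bounded_lipschitz_on_coord(1) assms] coeff_box_fst_0; simp)
qed

lemma bounded_lipschitz_on_strip_layer:
  assumes "\<delta> > 0" and "j \<le> k"
  shows "bounded_lipschitz_on (coeff_box (Suc k) C \<delta>) (dist_upto (Suc k)) (\<lambda>p. fst (strip_layer p) j)"
    and "bounded_lipschitz_on (coeff_box (Suc k) C \<delta>) (dist_upto (Suc k)) (\<lambda>p. snd (strip_layer p) j)"
proof -
  have j: "j \<le> Suc k" "Suc j \<le> Suc k"
    using assms(2) by simp_all
  show "bounded_lipschitz_on (coeff_box (Suc k) C \<delta>) (dist_upto (Suc k)) (\<lambda>p. fst (strip_layer p) j)"
    unfolding strip_layer_def fst_conv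
    by (intro bounded_lipschitz_on_mult bounded_lipschitz_on_layer_scale bounded_lipschitz_on_add
        bounded_lipschitz_on_cnj bounded_lipschitz_on_layer_coeff[OF assms(1)] bounded_lipschitz_on_coord j)
  show "bounded_lipschitz_on (coeff_box (Suc k) C \<delta>) (dist_upto (Suc k)) (\<lambda>p. snd (strip_layer p) j)"
    unfolding strip_layer_def snd_conv
    by (intro bounded_lipschitz_on_mult bounded_lipschitz_on_layer_scale bounded_lipschitz_on_diff
        bounded_lipschitz_on_cnj bounded_lipschitz_on_layer_coeff[OF assms(1)] bounded_lipschitz_on_coord j)
qed

lemma dist_upto_strip_layer:
  assumes "\<delta> > 0"
  shows "\<exists>M\<ge>0. \<forall>p\<in>coeff_box (Suc k) C \<delta>. \<forall>q\<in>coeff_box (Suc k) C \<delta>.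
    dist_upto k (strip_layer p) (strip_layer q) \<le> M * dist_upto (Suc k) p q"
  unfolding dist_upto_def[of k]
proof (rule lipschitz_bound_sum)
  let ?X = "coeff_box (Suc k) C \<delta>"
  fix j
  assume "j \<in> {..k}"
  then have j: "j \<le> k" by simp
  obtain L1 where L1: "L1 \<ge> 0" "\<forall>p\<in>?X. \<forall>q\<in>?X.
      cmod (fst (strip_layer p) j - fst (strip_layer q) j) \<le> L1 * dist_upto (Suc k) p q"
    using bounded_lipschitz_on_strip_layer(1)[OF assms j, of C] unfolding bounded_lipschitz_on_def by blast
  obtain L2 where L2: "L2 \<ge> 0" "\<forall>p\<in>?X. \<forall>q\<in>?X.
      cmod (snd (strip_layer p) j - snd (strip_layer q) j) \<le> L2 * dist_upto (Suc k) p q"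
    using bounded_lipschitz_on_strip_layer(2)[OF assms j, of C] unfolding bounded_lipschitz_on_def by blast
  show "\<exists>L\<ge>0. \<forall>p\<in>?X. \<forall>q\<in>?X.
      cmod (fst (strip_layer p) j - fst (strip_layer q) j) + cmod (snd (strip_layer p) j - snd (strip_layer q) j)
        \<le> L * dist_upto (Suc k) p q"
    using L1 L2 by (intro exI[of _ "L1 + L2"]) (auto simp: distrib_right intro: add_mono)
qed simp

lemma norm_layer_combination_le:
  assumes "cmod s \<le> 1" "cmod x \<le> C" "cmod y \<le> C" "cmod g \<le> G"
  shows "cmod (s * (x + g * cnj y)) \<le> C + G * C"
    and "cmod (s * (x - g * cnj y)) \<le> C + G * C"
proof -
  have "cmod (s * (x + h * cnj y)) \<le> C + G * C" if "cmod h \<le> G" for h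
  proof -
    have "cmod (s * (x + h * cnj y)) \<le> 1 * cmod (x + h * cnj y)"
      unfolding norm_mult using assms(1) by (intro mult_right_mono) auto
    also have "\<dots> \<le> cmod x + cmod h * cmod y"
      by (metis mult_1 norm_mult norm_triangle_ineq complex_mod_cnj)
    also have "\<dots> \<le> C + G * C"
      using assms(2,3) that order_trans[OF norm_ge_zero that] by (intro add_mono mult_mono) auto
    finally show ?thesis .
  qed
  from this[of g] this[of "- g"] assms(4) show "cmod (s * (x + g * cnj y)) \<le> C + G * C"
    "cmod (s * (x - g * cnj y)) \<le> C + G * C"
    by simp_all
qed

lemma strip_layer_coeff_box:
  assumes "\<delta> > 0" and "C \<ge> 0" and "p \<in> coeff_box (Suc k) C \<delta>"
  shows "strip_layer p \<in> coeff_box k (C + C / \<delta> * C) \<delta>"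
proof -
  have p: "Im (fst p 0) = 0" "Re (fst p 0) > \<delta>" "\<And>j. j \<le> Suc k \<Longrightarrow> cmod (fst p j) \<le> C \<and> cmod (snd p j) \<le> C"
    using assms(3) by (auto simp: coeff_box_def)
  have "cmod (layer_coeff p) = cmod (snd p 0) / cmod (fst p 0)"
    by (simp add: layer_coeff_def norm_divide)
  also have "\<dots> \<le> C / \<delta>"
    using p(3)[of 0] coeff_box_fst_0[OF assms(3)] assms(1,2) by (intro frac_le) auto
  finally have g: "cmod (layer_coeff p) \<le> C / \<delta>" .
  have "Re (fst (strip_layer p) 0) > \<delta>" "Im (fst (strip_layer p) 0) = 0"
    using strip_layer_fst_0_ge[of p] strip_layer_fst_0_real[of p] p(1,2) assms(1) by auto
  moreover have "cmod (fst (strip_layer p) j) \<le> C + C / \<delta> * C" "cmod (snd (strip_layer p) j) \<le> C + C / \<delta> * C"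
    if "j \<le> k" for j
    unfolding strip_layer_def fst_conv snd_conv using that p(3)
    by (intro norm_layer_combination_le norm_layer_scale_le_1 g; simp)+
  ultimately show ?thesis
    by (simp add: coeff_box_def)
qed

lemma bounded_lipschitz_on_inv_coeffs:
  assumes "\<delta> > 0" and "C \<ge> 0"
  shows "bounded_lipschitz_on (coeff_box k C \<delta>) (dist_upto k) (\<lambda>p. inv_coeffs p k)"
  using assms(2)
proof (induction k arbitrary: C)
  case 0
  then show ?case
    using bounded_lipschitz_on_layer_coeff[OF assms(1)] by simp
next
  case (Suc k)
  obtain M where M: "M \<ge> 0" "\<forall>p\<in>coeff_box (Suc k) C \<delta>. \<forall>q\<in>coeff_box (Suc k) C \<delta>.
      dist_upto k (strip_layer p) (strip_layer q) \<le> M * dist_upto (Suc k) p q"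
    using dist_upto_strip_layer[OF assms(1)] by blast
  have "C + C / \<delta> * C \<ge> 0"
    using Suc.prems assms(1) by simp
  then show ?case
    unfolding inv_coeffs.simps(2)
  proof (rule bounded_lipschitz_on_compose[OF Suc.IH])
    show "strip_layer ` coeff_box (Suc k) C \<delta> \<subseteq> coeff_box k (C + C / \<delta> * C) \<delta>"
      using strip_layer_coeff_box[OF assms(1) Suc.prems] by auto
  qed (use M in auto)
qed

lemma nlft_coeffs_norm_le:
  assumes "B \<ge> 0" and "\<forall>j<m. cmod (\<gamma> j) \<le> B"
  shows "cmod (fst (nlft_coeffs m \<gamma>) i) \<le> (1 + B) ^ m \<and> cmod (snd (nlft_coeffs m \<gamma>) i) \<le> (1 + B) ^ m"
  using assms(2)
proof (induction m arbitrary: \<gamma> i)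
  case 0
  then show ?case by simp
next
  case (Suc m)
  let ?c = "nlft_coeffs m (\<lambda>k. \<gamma> (Suc k))"
  have IH: "cmod (fst ?c i) \<le> (1 + B) ^ m" "cmod (snd ?c i) \<le> (1 + B) ^ m" "cmod (rshift (snd ?c) i) \<le> (1 + B) ^ m" for i
    using Suc.IH[of "\<lambda>k. \<gamma> (Suc k)"] Suc.prems assms(1) by (auto simp: rshift_def split: nat.split)
  have pow: "(1 + B) ^ Suc m = (1 + B) ^ m + B * (1 + B) ^ m"
    by (simp add: algebra_simps)
  have "cmod (\<gamma> 0) \<le> B"
    using Suc.prems by simp
  then show ?case
    unfolding pow nlft_coeffs.simps add_layer_def fst_conv snd_conv
    by (intro conjI norm_layer_combination_le[OF norm_layer_scale_le_1] IH)
qed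

lemma mem_S_delta: "p \<in> S_delta n \<delta> \<longleftrightarrow> p \<in> S_set n \<and> Re (fst p 0) > \<delta>"
  by (cases p) (simp add: S_delta_def)

lemma prod_le_factor:
  fixes f :: "'a \<Rightarrow> real"
  assumes "finite A" "j \<in> A" "\<And>k. k \<in> A \<Longrightarrow> 0 \<le> f k \<and> f k \<le> 1"
  shows "prod f A \<le> f j"
proof -
  have "prod f A = f j * prod f (A - {j})"
    using assms by (simp add: prod.remove)
  also have "\<dots> \<le> f j * 1"
    using assms by (intro mult_left_mono prod_le_1) auto
  finally show ?thesis by simp
qed

lemma S_delta_inv_coeffs_le:
  assumes "\<delta> > 0" and "p \<in> S_delta (Suc m) \<delta>" and "j < Suc m"
  shows "cmod (inv_coeffs p j) \<le> 1 / \<delta>"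
proof -
  define f where "f k = 1 / sqrt (1 + (cmod (inv_coeffs p k))\<^sup>2)" for k
  have f01: "0 \<le> f k \<and> f k \<le> 1" for k
    by (simp add: f_def divide_le_eq_1 add_pos_nonneg)
  have "\<delta> < Re (fst (nlft_coeffs (Suc m) (inv_coeffs p)) 0)"
    using assms(2) by (simp only: mem_S_delta nlft_coeffs_inv_coeffs)
  also have "\<dots> = (\<Prod>k<Suc m. f k)"
    unfolding nlft_coeffs_fst_0 f_def Re_complex_of_real ..
  also have "\<dots> \<le> f j"
    using assms(3) f01 by (intro prod_le_factor) auto
  finally have "\<delta> * sqrt (1 + (cmod (inv_coeffs p j))\<^sup>2) < 1"
    by (simp add: f_def less_divide_eq add_pos_nonneg mult.commute)
  moreover have "cmod (inv_coeffs p j) \<le> sqrt (1 + (cmod (inv_coeffs p j))\<^sup>2)"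
    by (rule real_le_rsqrt) simp
  ultimately have "\<delta> * cmod (inv_coeffs p j) < 1"
    using assms(1) by (meson le_less_trans mult_left_mono less_imp_le)
  then show ?thesis
    using assms(1) by (simp add: field_simps)
qed

lemma S_delta_subset_coeff_box:
  assumes "\<delta> > 0" and "0 < n"
  shows "S_delta n \<delta> \<subseteq> coeff_box k ((1 + 1 / \<delta>) ^ n) \<delta>"
proof
  fix p
  assume p: "p \<in> S_delta n \<delta>"
  obtain m where m: "n = Suc m" using assms(2) by (cases n) auto
  have "cmod (fst (nlft_coeffs n (inv_coeffs p)) i) \<le> (1 + 1 / \<delta>) ^ n \<and>
      cmod (snd (nlft_coeffs n (inv_coeffs p)) i) \<le> (1 + 1 / \<delta>) ^ n" for i
    using assms(1) p S_delta_inv_coeffs_le[of \<delta> p m] by (intro nlft_coeffs_norm_le) (auto simp: m)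
  moreover have "nlft_coeffs n (inv_coeffs p) = p"
    using p unfolding m mem_S_delta by (simp only: nlft_coeffs_inv_coeffs)
  ultimately show "p \<in> coeff_box k ((1 + 1 / \<delta>) ^ n) \<delta>"
    using p S_set_fst_0(1)[of p n] by (simp add: coeff_box_def mem_S_delta)
qed

lemma dist_upto_le_dist_pair:
  assumes "k < n"
  shows "dist_upto k p q \<le> 2 * real (Suc k) * dist_pair n p q"
proof -
  let ?h = "\<lambda>j. (cmod (fst p j - fst q j))\<^sup>2 + (cmod (snd p j - snd q j))\<^sup>2"
  have "cmod (fst p j - fst q j) \<le> dist_pair n p q \<and> cmod (snd p j - snd q j) \<le> dist_pair n p q"
    if "j < n" for j
  proof -
    have "?h j \<le> (\<Sum>i<n. ?h i)"
      using that by (intro member_le_sum) auto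
    then have "sqrt ((cmod (fst p j - fst q j))\<^sup>2) \<le> dist_pair n p q \<and>
        sqrt ((cmod (snd p j - snd q j))\<^sup>2) \<le> dist_pair n p q"
      unfolding dist_pair_def by (smt (verit) real_sqrt_le_mono zero_le_power2)
    then show ?thesis
      by simp
  qed
  then have "dist_upto k p q \<le> (\<Sum>j\<le>k. 2 * dist_pair n p q)"
    unfolding dist_upto_def using assms
    by (intro sum_mono) (smt (verit) atMost_iff le_less_trans)
  then show ?thesis
    by (simp add: algebra_simps)
qed

lemma lipschitz_inv_coeffs_S_delta:
  assumes "\<delta> > 0" and "k < n"
  shows "\<exists>L\<ge>0. \<forall>p\<in>S_delta n \<delta>. \<forall>q\<in>S_delta n \<delta>.
    cmod (inv_coeffs p k - inv_coeffs q k) \<le> L * dist_pair n p q"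
proof -
  let ?X = "coeff_box k ((1 + 1 / \<delta>) ^ n) \<delta>"
  obtain L where "L \<ge> 0" and L: "\<forall>p\<in>?X. \<forall>q\<in>?X. cmod (inv_coeffs p k - inv_coeffs q k) \<le> L * dist_upto k p q"
    using bounded_lipschitz_on_inv_coeffs[OF assms(1), of "(1 + 1 / \<delta>) ^ n" k] assms(1)
    unfolding bounded_lipschitz_on_def by auto
  have "cmod (inv_coeffs p k - inv_coeffs q k) \<le> L * (2 * real (Suc k)) * dist_pair n p q"
    if "p \<in> S_delta n \<delta>" "q \<in> S_delta n \<delta>" for p q
  proof -
    have "p \<in> ?X" "q \<in> ?X"
      using that S_delta_subset_coeff_box[OF assms(1), of n k] assms(2) by auto
    then have "cmod (inv_coeffs p k - inv_coeffs q k) \<le> L * dist_upto k p q"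
      using L by blast
    also have "\<dots> \<le> L * (2 * real (Suc k) * dist_pair n p q)"
      using dist_upto_le_dist_pair[OF assms(2)] \<open>L \<ge> 0\<close> by (rule mult_left_mono)
    finally show ?thesis
      by (simp add: mult.assoc)
  qed
  then show ?thesis
    using \<open>L \<ge> 0\<close> by (intro exI[of _ "L * (2 * real (Suc k))"]) auto
qed

theorem corollary6p3:
  fixes n :: nat and \<delta> :: real
  assumes "n \<ge> 2" and "\<delta> > 0"
  shows "\<exists>L::real. \<forall>p\<in>S_delta n \<delta>. \<forall>q\<in>S_delta n \<delta>.
           dist_seq n (inv_nlft n p) (inv_nlft n q) \<le> L * dist_pair n p q"
proof -
  let ?S = "S_delta n \<delta>"
  obtain L where L: "\<forall>p\<in>?S. \<forall>q\<in>?S. (\<Sum>k<n. cmod (inv_coeffs p k - inv_coeffs q k)) \<le> L * dist_pair n p q"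
    using lipschitz_bound_sum[of "{..<n}" ?S "\<lambda>k p q. cmod (inv_coeffs p k - inv_coeffs q k)" "dist_pair n"]
      lipschitz_inv_coeffs_S_delta[OF assms(2), of _ n] by auto
  show ?thesis
  proof (intro exI[of _ L] ballI)
    fix p q
    assume pq: "p \<in> ?S" "q \<in> ?S"
    then have "dist_seq n (inv_nlft n p) (inv_nlft n q) = L2_set (\<lambda>k. cmod (inv_coeffs p k - inv_coeffs q k)) {..<n}"
      using assms(1) inv_nlft_eq_inv_coeffs by (simp add: mem_S_delta dist_seq_def L2_set_def)
    also have "\<dots> \<le> (\<Sum>k<n. cmod (inv_coeffs p k - inv_coeffs q k))"
      by (rule L2_set_le_sum) simp
    also have "\<dots> \<le> L * dist_pair n p q"
      using L pq by blast
    finally show "dist_seq n (inv_nlft n p) (inv_nlft n q) \<le> L * dist_pair n p q" .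
  qed
qed

end
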